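(* For any path $\alpha:[0,1]\to\mathrm{Mult}_n(\mathbb{C})$ and any $\widetilde\alpha(0)\in\mathbb{C}^n$ with $\mathrm{Mult}(\widetilde\alpha(0))=\alpha(0)$, there exists a path $\widetilde\alpha:[0,1]\to\mathbb{C}^n$ starting at $\widetilde\alpha(0)$ with $\mathrm{Mult}\circ\widetilde\alpha=\alpha$, and this lifted path is unique when $\alpha$ has weakly increasing shape.
   Context: $\mathrm{Mult}_n(\mathbb{C})=\mathbb{C}^n/\mathrm{Sym}_n$ is the space of $n$-element multisets in $\mathbb{C}$ and $\mathrm{Mult}:\mathbb{C}^n\to\mathrm{Mult}_n(\mathbb{C})$ the quotient map. The shape of a multiset is the integer partition of $n$ formed by its multiplicities. Integer partitions of $n$ are ordered by $\lambda\le\mu$ iff $\mu$ is obtained from $\lambda$ by partitioning the parts of $\lambda$ into blocks and summing each block. A path $\alpha$ has weakly increasing shape if $s\le t$ implies $\mathrm{Shape}(\alpha(s))\le\mathrm{Shape}(\alpha(t))$. *)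

theory Defs
  imports "HOL-Analysis.Analysis" "HOL-Library.Multiset"
begin

text \<open>C^n is rendered as complex ^ 'n (n = CARD('n), arbitrary but fixed).
  Mult sends a tuple to the multiset of its entries.\<close>
definition Mult :: "complex ^ 'n::finite \<Rightarrow> complex multiset" where
  "Mult x = image_mset (\<lambda>i. x $ i) (mset_set (UNIV :: 'n set))"

text \<open>Quotient topology on Mult_n(C) = image of Mult (the multisets of size n).\<close>
definition mult_open :: "'n::finite itself \<Rightarrow> complex multiset set \<Rightarrow> bool" where
  "mult_open _ U \<longleftrightarrow> U \<subseteq> range (Mult :: complex ^ 'n \<Rightarrow> complex multiset)
      \<and> open {x :: complex ^ 'n. Mult x \<in> U}"

lemma istopology_mult_open: "istopology (mult_open TYPE('n::finite))"
proof -
  have 1: "open {x :: complex ^ 'n. Mult x \<in> S \<and> Mult x \<in> T}"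
    if "open {x :: complex ^ 'n. Mult x \<in> S}" "open {x :: complex ^ 'n. Mult x \<in> T}" for S T
    using open_Int[OF that] by (simp add: Collect_conj_eq)
  have 2: "open {x :: complex ^ 'n. \<exists>X\<in>K. Mult x \<in> X}"
    if "\<forall>X\<in>K. open {x :: complex ^ 'n. Mult x \<in> X}" for K
  proof -
    have "{x :: complex ^ 'n. \<exists>X\<in>K. Mult x \<in> X} = (\<Union>X\<in>K. {x. Mult x \<in> X})" by auto
    then show ?thesis using that by auto
  qed
  show ?thesis unfolding istopology_def mult_open_def
    using 1 2 by auto
qed

definition Mult_top :: "'n::finite itself \<Rightarrow> complex multiset topology" where
  "Mult_top N = topology (mult_open N)"

text \<open>Shape: the integer partition (multiset of positive parts) of multiplicities.\<close>
definition Shape :: "'a multiset \<Rightarrow> nat multiset" where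
  "Shape M = image_mset (count M) (mset_set (set_mset M))"

text \<open>lam \<le> mu: mu arises by grouping the parts of lam into (nonempty) blocks
  and summing each block.\<close>
definition partition_le :: "nat multiset \<Rightarrow> nat multiset \<Rightarrow> bool" where
  "partition_le lam mu \<longleftrightarrow> (\<exists>P :: nat multiset multiset.
      {#} \<notin># P \<and> sum_mset P = lam \<and> image_mset sum_mset P = mu)"

definition weakly_increasing_shape :: "(real \<Rightarrow> 'a multiset) \<Rightarrow> bool" where
  "weakly_increasing_shape \<alpha> \<longleftrightarrow>
     (\<forall>s t. 0 \<le> s \<longrightarrow> s \<le> t \<longrightarrow> t \<le> 1 \<longrightarrow> partition_le (Shape (\<alpha> s)) (Shape (\<alpha> t)))"

end

theory Submission
  imports Defs
begin

text \<open>Existence is proved by induction on the number of points. Near a time where the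
  multiset has two distinct points, a small ball around one of them separates its cluster from
  the other points; both parts have fewer points and move continuously, so lifts exist locally,
  and real induction spreads local lifts over every interval on which the multiset is never a
  single repeated point. Where it is a single repeated point, any choice of indices is
  continuous, so lifts on the components of the remaining set glue to a global lift.

  Uniqueness: if two lifts agree at \<open>\<tau>\<close>, then shortly after \<open>\<tau>\<close> every index stays near its
  value at \<open>\<tau>\<close>. Since the shape only coarsens, the number of distinct points cannot increase,
  which forces the two lifts to agree index by index; real induction again propagates the
  agreement over \<open>[0, 1]\<close>.\<close>

section \<open>Multisets of entries and matchings\<close>

definition entries :: "'i set \<Rightarrow> ('i \<Rightarrow> 'a) \<Rightarrow> 'a multiset" where
  "entries I x = image_mset x (mset_set I)"

lemma entries_insert: "finite I \<Longrightarrow> i \<notin> I \<Longrightarrow> entries (insert i I) x = add_mset (x i) (entries I x)"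
  by (simp add: entries_def)

lemma entries_cong: "(\<And>i. i \<in> I \<Longrightarrow> x i = y i) \<Longrightarrow> entries I x = entries I y"
  unfolding entries_def by (cases "finite I") (auto intro: image_mset_cong)

lemma size_entries [simp]: "size (entries I x) = card I"
  by (simp add: entries_def)

lemma set_mset_entries: "finite I \<Longrightarrow> set_mset (entries I x) = x ` I"
  by (simp add: entries_def)

lemma filter_entries: "finite I \<Longrightarrow> filter_mset P (entries I x) = entries {i\<in>I. P (x i)} x"
  by (simp add: entries_def filter_mset_image_mset)

lemma entries_Un:
  "finite I \<Longrightarrow> finite J \<Longrightarrow> I \<inter> J = {} \<Longrightarrow> entries (I \<union> J) x = entries I x + entries J x"
  by (simp add: entries_def mset_set_Union)

lemma entries_surj: "finite I \<Longrightarrow> size M = card I \<Longrightarrow> \<exists>x. entries I x = M"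
proof (induction I arbitrary: M rule: finite_induct)
  case empty
  then show ?case by (simp add: entries_def)
next
  case (insert i I)
  then have "size M = Suc (card I)" by simp
  then obtain z M' where M: "M = add_mset z M'" using size_eq_Suc_imp_eq_union by metis
  with \<open>size M = Suc (card I)\<close> insert.IH obtain x where "entries I x = M'" by auto
  then have "entries I (x(i := z)) = M'"
    using insert.hyps(2) by (metis entries_cong fun_upd_other)
  then have "entries (insert i I) (x(i := z)) = M"
    using insert.hyps M by (simp add: entries_insert)
  then show ?case by blast
qed

definition concentrated :: "'a multiset \<Rightarrow> bool" where
  "concentrated M \<longleftrightarrow> (\<forall>c\<in>#M. \<forall>d\<in>#M. c = d)"

lemma entries_concentrated:
  assumes "concentrated M" "size M = card I"
  shows "entries I (\<lambda>i. SOME c. c \<in># M) = M"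
proof (cases "M = {#}")
  case True
  with assms(2) show ?thesis by (cases "finite I") (simp_all add: entries_def)
next
  case False
  then obtain c where c: "c \<in># M" by blast
  with assms(1) have "(SOME c. c \<in># M) = c"
    unfolding concentrated_def by (metis someI_ex)
  moreover have "M = replicate_mset (size M) c"
    using c assms(1) unfolding concentrated_def by (intro set_mset_subset_singletonD) blast
  ultimately show ?thesis
    using assms(2) by (simp add: entries_def image_mset_const_eq)
qed

lemma concentrated_entry:
  assumes "finite I" "concentrated M" "entries I y = M" "i \<in> I"
  shows "y i = (SOME c. c \<in># M)"
proof -
  have "y i \<in># M" using assms(1,3,4) set_mset_entries[of I y] by auto
  moreover from this have "(SOME c. c \<in># M) \<in># M" by (rule someI)
  ultimately show ?thesis using assms(2) unfolding concentrated_def by blast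
qed

lemma pairs_with_fst_entries:
  assumes "finite I" "image_mset fst P = entries I x"
  shows "\<exists>y. image_mset (\<lambda>i. (x i, y i)) (mset_set I) = P"
  using assms
proof (induction I arbitrary: P rule: finite_induct)
  case empty
  then show ?case by (simp add: entries_def)
next
  case (insert i I)
  then have "x i \<in># image_mset fst P" by (simp add: entries_insert)
  then obtain p where p: "p \<in># P" "fst p = x i" by auto
  define P' where "P' = P - {#p#}"
  have P: "P = add_mset p P'" using p P'_def by simp
  have "image_mset fst P' = entries I x" using insert P p by (simp add: entries_insert)
  with insert.IH obtain y where y: "image_mset (\<lambda>i. (x i, y i)) (mset_set I) = P'" by blast
  define y' where "y' = y(i := snd p)"
  have "image_mset (\<lambda>j. (x j, y' j)) (mset_set I) = P'"
    unfolding y[symmetric] y'_def by (rule image_mset_cong) (use insert.hyps in auto)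
  then have "image_mset (\<lambda>j. (x j, y' j)) (mset_set (insert i I)) = P"
    using insert.hyps P p by (simp add: y'_def) (metis prod.collapse)
  then show ?case by blast
qed

definition matched_within :: "real \<Rightarrow> 'a::metric_space multiset \<Rightarrow> 'a multiset \<Rightarrow> bool" where
  "matched_within e M N \<longleftrightarrow>
     (\<exists>P. image_mset fst P = M \<and> image_mset snd P = N \<and> (\<forall>p\<in>#P. dist (fst p) (snd p) < e))"

lemma matched_within_refl: "e > 0 \<Longrightarrow> matched_within e M M"
  unfolding matched_within_def
  by (rule exI[of _ "image_mset (\<lambda>z. (z, z)) M"]) (auto simp: multiset.map_comp o_def)

lemma matched_within_sym: "matched_within e M N \<Longrightarrow> matched_within e N M"
proof -
  assume "matched_within e M N"
  then obtain P where "image_mset fst P = M" "image_mset snd P = N" "\<forall>p\<in>#P. dist (fst p) (snd p) < e"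
    unfolding matched_within_def by blast
  then show ?thesis
    unfolding matched_within_def
    by (intro exI[of _ "image_mset prod.swap P"]) (auto simp: multiset.map_comp o_def dist_commute)
qed

lemma matched_within_mono: "matched_within e M N \<Longrightarrow> e \<le> e' \<Longrightarrow> matched_within e' M N"
  unfolding matched_within_def by force

lemma size_matched_within: "matched_within e M N \<Longrightarrow> size M = size N"
  unfolding matched_within_def by auto

lemma matched_within_partner:
  assumes "matched_within e M N" "w \<in># N"
  shows "\<exists>z\<in>#M. dist z w < e"
  using assms unfolding matched_within_def by force

lemma matched_within_entries:
  assumes "finite I" "matched_within e (entries I x) N"
  shows "\<exists>y. entries I y = N \<and> (\<forall>i\<in>I. dist (x i) (y i) < e)"
proof -
  obtain P where P: "image_mset fst P = entries I x" "image_mset snd P = N"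
    "\<forall>p\<in>#P. dist (fst p) (snd p) < e"
    using assms(2) unfolding matched_within_def by blast
  obtain y where y: "image_mset (\<lambda>i. (x i, y i)) (mset_set I) = P"
    using pairs_with_fst_entries[OF assms(1) P(1)] by blast
  have "entries I y = N"
    using P(2) y unfolding entries_def by (auto simp: multiset.map_comp o_def)
  moreover have "dist (x i) (y i) < e" if "i \<in> I" for i
    using P(3) y that assms(1) by force
  ultimately show ?thesis by blast
qed

lemma matched_within_filter:
  assumes "matched_within e M N"
    and "\<And>z w. z \<in># M \<Longrightarrow> w \<in># N \<Longrightarrow> dist z w < e \<Longrightarrow> Q z \<longleftrightarrow> Q w"
  shows "matched_within e (filter_mset Q M) (filter_mset Q N)"
proof -
  obtain P where P: "image_mset fst P = M" "image_mset snd P = N" "\<forall>p\<in>#P. dist (fst p) (snd p) < e"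
    using assms(1) unfolding matched_within_def by blast
  define F where "F = filter_mset (\<lambda>p. Q (fst p)) P"
  have "F = filter_mset (\<lambda>p. Q (snd p)) P"
    unfolding F_def using P assms(2) by (intro filter_mset_cong) force+
  then have "image_mset snd F = filter_mset Q N"
    using P(2) by (simp add: image_mset_filter_mset_swap)
  moreover have "image_mset fst F = filter_mset Q M"
    using P(1) by (simp add: F_def image_mset_filter_mset_swap)
  moreover have "\<forall>p\<in>#F. dist (fst p) (snd p) < e"
    using P(3) by (simp add: F_def)
  ultimately show ?thesis
    unfolding matched_within_def by blast
qed

lemma separating_radius:
  fixes X :: "'a::metric_space set"
  assumes "finite X"
  obtains r where "r > 0" "\<And>u v. u \<in> X \<Longrightarrow> v \<in> X \<Longrightarrow> u \<noteq> v \<Longrightarrow> r \<le> dist u v"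
proof -
  define D where "D = (\<lambda>(u, v). dist u v) ` {p \<in> X \<times> X. fst p \<noteq> snd p}"
  have "finite D" unfolding D_def using assms by simp
  define r where "r = Min (insert 1 D)"
  have "r > 0" unfolding r_def using \<open>finite D\<close> by (subst Min_gr_iff) (auto simp: D_def)
  moreover have "r \<le> dist u v" if "u \<in> X" "v \<in> X" "u \<noteq> v" for u v
  proof -
    have "dist u v \<in> D" unfolding D_def using that by force
    then show ?thesis unfolding r_def using \<open>finite D\<close> by (intro Min_le) auto
  qed
  ultimately show ?thesis using that by blast
qed

lemma matched_within_gap:
  assumes "matched_within (r / 4) M N" "\<And>e. e \<in># M \<Longrightarrow> e \<noteq> c \<Longrightarrow> r \<le> dist c e" "c \<in># M" "z \<in># N"
  shows "dist z c < r / 4 \<or> 3 * r / 4 < dist z c"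
proof -
  obtain e where e: "e \<in># M" "dist e z < r / 4"
    using matched_within_partner[OF assms(1,4)] by blast
  show ?thesis
  proof (cases "e = c")
    case True
    with e show ?thesis by (simp add: dist_commute)
  next
    case False
    with assms(2) e(1) have "r \<le> dist c e" by blast
    moreover have "dist c e \<le> dist c z + dist z e" by (rule dist_triangle)
    ultimately show ?thesis using e(2) by (simp add: dist_commute)
  qed
qed

section \<open>Continuous paths of multisets and their lifts\<close>

definition mset_continuous_on :: "real set \<Rightarrow> (real \<Rightarrow> 'a::metric_space multiset) \<Rightarrow> bool" where
  "mset_continuous_on S A \<longleftrightarrow>
     (\<forall>t\<in>S. \<forall>e>0. \<exists>d>0. \<forall>s\<in>S. \<bar>s - t\<bar> < d \<longrightarrow> matched_within e (A t) (A s))"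

lemma mset_continuous_on_subset: "mset_continuous_on S A \<Longrightarrow> T \<subseteq> S \<Longrightarrow> mset_continuous_on T A"
  unfolding mset_continuous_on_def by (meson subsetD)

lemma mset_continuous_on_reflect:
  assumes "mset_continuous_on S A"
  shows "mset_continuous_on (uminus ` S) (\<lambda>t. A (- t))"
  unfolding mset_continuous_on_def
proof (intro ballI allI impI)
  fix t e :: real assume "t \<in> uminus ` S" "e > 0"
  then have "- t \<in> S" by auto
  with assms \<open>e > 0\<close> obtain d where d: "d > 0" "\<forall>s\<in>S. \<bar>s - (- t)\<bar> < d \<longrightarrow> matched_within e (A (- t)) (A s)"
    unfolding mset_continuous_on_def by blast
  have "\<bar>s - (- t)\<bar> = \<bar>- s - t\<bar>" for s by arith
  with d show "\<exists>d>0. \<forall>s\<in>uminus ` S. \<bar>s - t\<bar> < d \<longrightarrow> matched_within e (A (- t)) (A (- s))"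
    by (intro exI[of _ d]) auto
qed

lemma mset_continuous_on_filter:
  assumes "mset_continuous_on S A" "\<rho> > 0"
    and "\<And>t u z w. t \<in> S \<Longrightarrow> u \<in> S \<Longrightarrow> z \<in># A t \<Longrightarrow> w \<in># A u \<Longrightarrow> dist z w < \<rho> \<Longrightarrow> Q z \<longleftrightarrow> Q w"
  shows "mset_continuous_on S (\<lambda>t. filter_mset Q (A t))"
  unfolding mset_continuous_on_def
proof (intro ballI allI impI)
  fix t e :: real assume "t \<in> S" "e > 0"
  with assms(2) have "min e \<rho> > 0" by simp
  with assms(1) \<open>t \<in> S\<close> obtain d where d: "d > 0"
    "\<forall>s\<in>S. \<bar>s - t\<bar> < d \<longrightarrow> matched_within (min e \<rho>) (A t) (A s)"
    unfolding mset_continuous_on_def by blast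
  have "matched_within e (filter_mset Q (A t)) (filter_mset Q (A s))" if "s \<in> S" "\<bar>s - t\<bar> < d" for s
  proof -
    from d(2) that have m: "matched_within (min e \<rho>) (A t) (A s)" by blast
    have "Q z \<longleftrightarrow> Q w" if "z \<in># A t" "w \<in># A s" "dist z w < min e \<rho>" for z w
      using assms(3)[OF \<open>t \<in> S\<close> \<open>s \<in> S\<close> that(1,2)] that(3) by simp
    then have "matched_within (min e \<rho>) (filter_mset Q (A t)) (filter_mset Q (A s))"
      by (rule matched_within_filter[OF m])
    then show ?thesis
      by (rule matched_within_mono) (rule min.cobounded1)
  qed
  with d(1) show "\<exists>d>0. \<forall>s\<in>S. \<bar>s - t\<bar> < d \<longrightarrow> matched_within e (filter_mset Q (A t)) (filter_mset Q (A s))"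
    by blast
qed

lemma nonconcentrated_near:
  assumes "mset_continuous_on S A" "t \<in> S" "\<not> concentrated (A t)"
  obtains d where "d > 0" "\<And>s. s \<in> S \<Longrightarrow> \<bar>s - t\<bar> < d \<Longrightarrow> \<not> concentrated (A s)"
proof -
  obtain c c' where c: "c \<in># A t" "c' \<in># A t" "c \<noteq> c'"
    using assms(3) unfolding concentrated_def by blast
  define e where "e = dist c c' / 2"
  have "e > 0" unfolding e_def using c(3) by simp
  with assms(1,2) obtain d where d: "d > 0" "\<forall>s\<in>S. \<bar>s - t\<bar> < d \<longrightarrow> matched_within e (A s) (A t)"
    unfolding mset_continuous_on_def by (meson matched_within_sym)
  have "\<not> concentrated (A s)" if s: "s \<in> S" "\<bar>s - t\<bar> < d" for s
  proof
    assume conc: "concentrated (A s)"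
    have m: "matched_within e (A s) (A t)" using d(2) s by blast
    obtain w where w: "w \<in># A s" "dist w c < e" using matched_within_partner[OF m c(1)] by blast
    obtain w' where w': "w' \<in># A s" "dist w' c' < e" using matched_within_partner[OF m c(2)] by blast
    from conc w(1) w'(1) have "w = w'" unfolding concentrated_def by blast
    with w w' have "dist c c' < 2 * e"
      using dist_triangle_less_add[of c w e c' e] by (simp add: dist_commute)
    then show False unfolding e_def by simp
  qed
  with d(1) that show thesis by blast
qed

text \<open>Lifts are families indexed by an arbitrary finite set rather than vectors, so that a
  sub-multiset can be lifted along a subset of the indices.\<close>
definition lift_on :: "'i set \<Rightarrow> real set \<Rightarrow> (real \<Rightarrow> 'a::topological_space multiset) \<Rightarrow> (real \<Rightarrow> 'i \<Rightarrow> 'a) \<Rightarrow> bool" where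
  "lift_on I S A \<beta> \<longleftrightarrow> (\<forall>i\<in>I. continuous_on S (\<lambda>t. \<beta> t i)) \<and> (\<forall>t\<in>S. entries I (\<beta> t) = A t)"

lemma lift_on_singleton: "entries I y = A t \<Longrightarrow> lift_on I {t} A (\<lambda>_. y)"
  by (simp add: lift_on_def)

lemma lift_on_glue:
  assumes "lift_on I (S \<inter> {..m}) A \<beta>1" "lift_on I (S \<inter> {m..}) A \<beta>2" "\<forall>i\<in>I. \<beta>1 m i = \<beta>2 m i"
  shows "lift_on I S A (\<lambda>t. if t \<le> m then \<beta>1 t else \<beta>2 t)"
proof -
  have sets: "{t \<in> S. t \<le> m} = S \<inter> {..m}" "{t \<in> S. m \<le> t} = S \<inter> {m..}" by auto
  have "continuous_on S (\<lambda>t. (if t \<le> m then \<beta>1 t else \<beta>2 t) i)" if "i \<in> I" for i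
  proof -
    have eq: "(\<lambda>t. (if t \<le> m then \<beta>1 t else \<beta>2 t) i) = (\<lambda>t. if t \<le> m then \<beta>1 t i else \<beta>2 t i)"
      by (simp add: fun_eq_iff)
    show ?thesis
      unfolding eq by (rule continuous_on_cases_le[where h = "\<lambda>t. t"])
        (use assms that in \<open>auto simp: sets lift_on_def\<close>)
  qed
  moreover have "entries I (if t \<le> m then \<beta>1 t else \<beta>2 t) = A t" if "t \<in> S" for t
    using assms(1,2) that unfolding lift_on_def by (cases "t \<le> m") auto
  ultimately show ?thesis
    unfolding lift_on_def by blast
qed

lemma lift_on_reflect:
  assumes "lift_on I S A \<beta>"
  shows "lift_on I (uminus ` S) (\<lambda>t. A (- t)) (\<lambda>t. \<beta> (- t))"
proof -
  have "continuous_on (uminus ` S) (\<lambda>t. \<beta> (- t) i)" if "i \<in> I" for i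
  proof (rule continuous_on_compose2[of S "\<lambda>t. \<beta> t i"])
    show "continuous_on S (\<lambda>t. \<beta> t i)" using assms that unfolding lift_on_def by blast
  qed (auto intro: continuous_on_minus continuous_on_id)
  then show ?thesis
    using assms unfolding lift_on_def by auto
qed

lemma lift_on_Un_index:
  assumes "finite I" "J \<subseteq> I" "lift_on J S A1 \<beta>1" "lift_on (I - J) S A2 \<beta>2"
  shows "lift_on I S (\<lambda>t. A1 t + A2 t) (\<lambda>t i. if i \<in> J then \<beta>1 t i else \<beta>2 t i)"
proof -
  have "continuous_on S (\<lambda>t. if i \<in> J then \<beta>1 t i else \<beta>2 t i)" if "i \<in> I" for i
    using assms(3,4) that unfolding lift_on_def by (cases "i \<in> J") auto
  moreover have "entries I (\<lambda>i. if i \<in> J then \<beta>1 t i else \<beta>2 t i) = A1 t + A2 t" if "t \<in> S" for t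
  proof -
    have "finite J" using finite_subset[OF assms(2,1)] .
    then have "entries (J \<union> (I - J)) f = entries J f + entries (I - J) f" for f
      by (rule entries_Un) (use assms(1) in auto)
    moreover have "J \<union> (I - J) = I" using assms(2) by blast
    ultimately have "entries I (\<lambda>i. if i \<in> J then \<beta>1 t i else \<beta>2 t i) =
        entries J (\<lambda>i. if i \<in> J then \<beta>1 t i else \<beta>2 t i) + entries (I - J) (\<lambda>i. if i \<in> J then \<beta>1 t i else \<beta>2 t i)"
      by metis
    also have "\<dots> = entries J (\<beta>1 t) + entries (I - J) (\<beta>2 t)"
      by (intro arg_cong2[where f = "(+)"] entries_cong) auto
    finally show ?thesis
      using assms(3,4) that unfolding lift_on_def by simp
  qed
  ultimately show ?thesis unfolding lift_on_def by blast
qed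

lemma lift_on_filter_partition:
  assumes "finite I" "entries I y = A s"
    and "lift_on {i\<in>I. Q (y i)} S (\<lambda>t. filter_mset Q (A t)) \<beta>1" "\<forall>i\<in>{i\<in>I. Q (y i)}. \<beta>1 s i = y i"
    and "lift_on {i\<in>I. \<not> Q (y i)} S (\<lambda>t. filter_mset (\<lambda>z. \<not> Q z) (A t)) \<beta>2"
      "\<forall>i\<in>{i\<in>I. \<not> Q (y i)}. \<beta>2 s i = y i"
  shows "\<exists>\<beta>. lift_on I S A \<beta> \<and> (\<forall>i\<in>I. \<beta> s i = y i)"
proof -
  define J where "J = {i\<in>I. Q (y i)}"
  have "I - J = {i\<in>I. \<not> Q (y i)}" unfolding J_def by blast
  then have "lift_on I S (\<lambda>t. filter_mset Q (A t) + filter_mset (\<lambda>z. \<not> Q z) (A t))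
      (\<lambda>t i. if i \<in> J then \<beta>1 t i else \<beta>2 t i)"
    using assms(1,3,5) unfolding J_def by (intro lift_on_Un_index) auto
  moreover have "(\<lambda>t. filter_mset Q (A t) + filter_mset (\<lambda>z. \<not> Q z) (A t)) = A"
    by (simp add: multiset_partition[symmetric])
  moreover have "\<forall>i\<in>I. (if i \<in> J then \<beta>1 s i else \<beta>2 s i) = y i"
    using assms(4,6) unfolding J_def by auto
  ultimately show ?thesis by auto
qed

lemma continuous_within_concentrated:
  assumes "mset_continuous_on S A" "t \<in> S" "concentrated (A t)"
    and "finite I" "i \<in> I" "\<forall>s\<in>S. entries I (\<beta> s) = A s"
  shows "continuous (at t within S) (\<lambda>s. \<beta> s i)"
  unfolding continuous_within_eps_delta
proof (intro allI impI)
  fix e :: real assume "e > 0"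
  with assms(1,2) obtain d where d: "d > 0" "\<forall>s\<in>S. \<bar>s - t\<bar> < d \<longrightarrow> matched_within e (A t) (A s)"
    unfolding mset_continuous_on_def by blast
  have mem: "\<beta> s i \<in># A s" if "s \<in> S" for s
  proof -
    have "\<beta> s i \<in> \<beta> s ` I" using assms(5) by blast
    with that assms(6) show ?thesis using set_mset_entries[OF assms(4), of "\<beta> s"] by simp
  qed
  have "dist (\<beta> s i) (\<beta> t i) < e" if s: "s \<in> S" "dist s t < d" for s
  proof -
    have "matched_within e (A t) (A s)" using d(2) s by (simp add: dist_real_def)
    then obtain z where z: "z \<in># A t" "dist z (\<beta> s i) < e"
      using matched_within_partner mem[OF s(1)] by blast
    moreover have "z = \<beta> t i"
      using assms(3) z(1) mem[OF assms(2)] unfolding concentrated_def by blast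
    ultimately show ?thesis by (simp add: dist_commute)
  qed
  with d(1) show "\<exists>d>0. \<forall>s\<in>S. dist s t < d \<longrightarrow> dist (\<beta> s i) (\<beta> t i) < e"
    by blast
qed

lemma continuous_within_if_eq_near:
  fixes f g :: "'a::metric_space \<Rightarrow> 'b::topological_space"
  assumes "continuous_on T f" "t \<in> S" "d > 0" "S \<inter> ball t d \<subseteq> T"
    and "\<And>s. s \<in> S \<Longrightarrow> dist s t < d \<Longrightarrow> f s = g s"
  shows "continuous (at t within S) g"
proof -
  have "t \<in> T" using assms(2-4) by auto
  then have "continuous (at t within S \<inter> ball t d) f"
    using assms(1,4) continuous_on_eq_continuous_within continuous_within_subset by blast
  moreover have "at t within S \<inter> ball t d = at t within S"
    by (rule at_within_nhd[of _ "ball t d"]) (use assms(3) in \<open>auto simp: Int_assoc\<close>)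
  ultimately have "continuous (at t within S) f" by simp
  then show ?thesis
    by (rule continuous_transform_within[OF _ assms(3,2)]) (rule assms(5))
qed

section \<open>From local to global lifts along intervals\<close>

lemma real_interval_induct:
  fixes P :: "real \<Rightarrow> bool"
  assumes "a \<le> b" and start: "P a"
    and step: "\<And>t. a \<le> t \<Longrightarrow> t < b \<Longrightarrow> P t \<Longrightarrow> \<exists>d>0. \<forall>s. t < s \<longrightarrow> s < t + d \<longrightarrow> s \<le> b \<longrightarrow> P s"
    and limit: "\<And>t. a < t \<Longrightarrow> t \<le> b \<Longrightarrow> (\<And>s. a \<le> s \<Longrightarrow> s < t \<Longrightarrow> P s) \<Longrightarrow> P t"
  shows "\<forall>t\<in>{a..b}. P t"
proof (rule ccontr)
  define T where "T = {t \<in> {a..b}. \<not> P t}"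
  assume "\<not> (\<forall>t\<in>{a..b}. P t)"
  then obtain t0 where t0: "t0 \<in> T" unfolding T_def by blast
  have bdd: "bdd_below T" unfolding T_def by (rule bdd_belowI[of _ a]) auto
  define x where "x = Inf T"
  have "a \<le> x" unfolding x_def using t0 by (intro cInf_greatest) (auto simp: T_def)
  have "x \<le> t0" unfolding x_def using t0 bdd by (rule cInf_lower)
  have below: "P s" if "a \<le> s" "s < x" for s
  proof (rule ccontr)
    assume "\<not> P s"
    then have "s \<in> T" using that \<open>x \<le> t0\<close> t0 unfolding T_def by auto
    then have "x \<le> s" unfolding x_def using bdd by (rule cInf_lower)
    with that show False by simp
  qed
  have "P x"
  proof (cases "x = a")
    case True
    with start show ?thesis by simp
  next
    case False
    with \<open>a \<le> x\<close> have "a < x" by simp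
    moreover have "x \<le> b" using \<open>x \<le> t0\<close> t0 unfolding T_def by simp
    ultimately show ?thesis by (rule limit[OF _ _ below])
  qed
  have "x < b"
  proof (rule ccontr)
    assume "\<not> x < b"
    with \<open>x \<le> t0\<close> t0 have "t0 = x" unfolding T_def by auto
    with t0 \<open>P x\<close> show False unfolding T_def by simp
  qed
  with step[OF \<open>a \<le> x\<close> _ \<open>P x\<close>] obtain d where d: "d > 0" "\<forall>s. x < s \<longrightarrow> s < x + d \<longrightarrow> s \<le> b \<longrightarrow> P s"
    by blast
  have "x + d \<le> t" if "t \<in> T" for t
  proof -
    have "x \<le> t" unfolding x_def using that bdd by (rule cInf_lower)
    moreover have "t \<noteq> x" using that \<open>P x\<close> unfolding T_def by auto
    ultimately show ?thesis using d(2) that unfolding T_def by force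
  qed
  then have "x + d \<le> x" unfolding x_def using t0 by (intro cInf_greatest) auto
  with d(1) show False by simp
qed

definition locally_liftable :: "'i set \<Rightarrow> real set \<Rightarrow> (real \<Rightarrow> 'a::topological_space multiset) \<Rightarrow> bool" where
  "locally_liftable I C A \<longleftrightarrow> (\<forall>t\<in>C. \<exists>d>0. \<forall>s s' y. s \<le> s' \<longrightarrow> {s..s'} \<subseteq> C \<inter> {t - d<..<t + d} \<longrightarrow>
     entries I y = A s \<longrightarrow> (\<exists>\<beta>. lift_on I {s..s'} A \<beta> \<and> (\<forall>i\<in>I. \<beta> s i = y i)))"

lemma lift_on_extend:
  assumes "lift_on I {u..w} A \<beta>" "u \<le> w" "w \<le> v"
    and "\<And>z. entries I z = A w \<Longrightarrow> \<exists>\<beta>'. lift_on I {w..v} A \<beta>' \<and> (\<forall>i\<in>I. \<beta>' w i = z i)"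
  shows "\<exists>\<beta>'. lift_on I {u..v} A \<beta>' \<and> (\<forall>t\<in>{u..w}. \<forall>i\<in>I. \<beta>' t i = \<beta> t i)"
proof -
  have "entries I (\<beta> w) = A w" using assms(1,2) unfolding lift_on_def by auto
  with assms(4) obtain \<beta>' where \<beta>': "lift_on I {w..v} A \<beta>'" "\<forall>i\<in>I. \<beta>' w i = \<beta> w i"
    by blast
  have sets: "{u..v} \<inter> {..w} = {u..w}" "{u..v} \<inter> {w..} = {w..v}" using assms(2,3) by auto
  have "lift_on I ({u..v} \<inter> {..w}) A \<beta>" "lift_on I ({u..v} \<inter> {w..}) A \<beta>'"
    unfolding sets by (fact assms(1), fact \<beta>'(1))
  then have "lift_on I {u..v} A (\<lambda>t. if t \<le> w then \<beta> t else \<beta>' t)"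
    by (rule lift_on_glue) (use \<beta>'(2) in simp)
  then show ?thesis by (intro exI[of _ "\<lambda>t. if t \<le> w then \<beta> t else \<beta>' t"]) auto
qed

lemma lift_on_closed_interval:
  assumes loc: "locally_liftable I C A" and "{u..v} \<subseteq> C" "u \<le> v" "entries I y = A u"
  shows "\<exists>\<beta>. lift_on I {u..v} A \<beta> \<and> (\<forall>i\<in>I. \<beta> u i = y i)"
proof -
  define P where "P w \<longleftrightarrow> (\<exists>\<beta>. lift_on I {u..w} A \<beta> \<and> (\<forall>i\<in>I. \<beta> u i = y i))" for w
  have extend: "\<exists>d>0. \<forall>w w'. u \<le> w \<longrightarrow> w \<le> w' \<longrightarrow> w' \<le> v \<longrightarrow> \<bar>w - t\<bar> < d \<longrightarrow> \<bar>w' - t\<bar> < d \<longrightarrow> P w \<longrightarrow> P w'"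
    if "t \<in> {u..v}" for t
  proof -
    have "t \<in> C" using that assms(2) by auto
    with loc obtain d where d: "d > 0" and lift: "\<forall>s s' z. s \<le> s' \<longrightarrow> {s..s'} \<subseteq> C \<inter> {t - d<..<t + d} \<longrightarrow>
        entries I z = A s \<longrightarrow> (\<exists>\<beta>. lift_on I {s..s'} A \<beta> \<and> (\<forall>i\<in>I. \<beta> s i = z i))"
      unfolding locally_liftable_def by blast
    have "P w'" if w: "u \<le> w" "w \<le> w'" "w' \<le> v" "\<bar>w - t\<bar> < d" "\<bar>w' - t\<bar> < d" and "P w" for w w'
    proof -
      obtain \<beta> where \<beta>: "lift_on I {u..w} A \<beta>" "\<forall>i\<in>I. \<beta> u i = y i"
        using \<open>P w\<close> unfolding P_def by blast
      have "{w..w'} \<subseteq> C \<inter> {t - d<..<t + d}" using w assms(2) by auto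
      then have "\<exists>\<beta>'. lift_on I {w..w'} A \<beta>' \<and> (\<forall>i\<in>I. \<beta>' w i = z i)" if "entries I z = A w" for z
        using lift w(2) that by blast
      with lift_on_extend[OF \<beta>(1) w(1,2)] obtain \<beta>' where
        "lift_on I {u..w'} A \<beta>'" "\<forall>t\<in>{u..w}. \<forall>i\<in>I. \<beta>' t i = \<beta> t i"
        by blast
      then show "P w'" unfolding P_def using \<beta>(2) w(1) by auto
    qed
    with d show ?thesis by blast
  qed
  have "\<forall>w\<in>{u..v}. P w"
  proof (rule real_interval_induct[OF \<open>u \<le> v\<close>])
    have "lift_on I {u..u} A (\<lambda>_. y)" using lift_on_singleton[of I y A u] assms(4) by simp
    then show "P u" unfolding P_def by (intro exI[of _ "\<lambda>_. y"] conjI) auto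
  next
    fix t assume t: "u \<le> t" "t < v" "P t"
    then obtain d where d: "d > 0" and ext: "\<forall>w w'. u \<le> w \<longrightarrow> w \<le> w' \<longrightarrow> w' \<le> v \<longrightarrow>
        \<bar>w - t\<bar> < d \<longrightarrow> \<bar>w' - t\<bar> < d \<longrightarrow> P w \<longrightarrow> P w'"
      using extend[of t] by auto
    have "P s" if "t < s" "s < t + d" "s \<le> v" for s
      using ext[rule_format, of t s] t that d by simp
    with d show "\<exists>d>0. \<forall>s. t < s \<longrightarrow> s < t + d \<longrightarrow> s \<le> v \<longrightarrow> P s"
      by blast
  next
    fix t assume t: "u < t" "t \<le> v" and before: "\<And>s. u \<le> s \<Longrightarrow> s < t \<Longrightarrow> P s"
    then obtain d where d: "d > 0" and ext: "\<forall>w w'. u \<le> w \<longrightarrow> w \<le> w' \<longrightarrow> w' \<le> v \<longrightarrow>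
        \<bar>w - t\<bar> < d \<longrightarrow> \<bar>w' - t\<bar> < d \<longrightarrow> P w \<longrightarrow> P w'"
      using extend[of t] by auto
    define w where "w = max u (t - d / 2)"
    have "P w" unfolding w_def using before t d by simp
    then show "P t" using ext[rule_format, of w t] t d unfolding w_def by (simp add: abs_if)
  qed
  with assms(3) show ?thesis unfolding P_def by auto
qed

lemma lift_on_increasing_union:
  fixes v :: "nat \<Rightarrow> real"
  assumes F: "\<And>k. lift_on I {m..v k} A (F k)"
    and F_Suc: "\<And>k t i. t \<in> {m..v k} \<Longrightarrow> i \<in> I \<Longrightarrow> F (Suc k) t i = F k t i"
    and v_mono: "\<And>j k. j \<le> k \<Longrightarrow> v j \<le> v k"
    and S: "S \<subseteq> {m..}" "\<And>t. t \<in> S \<Longrightarrow> \<exists>k. t < v k"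
  shows "lift_on I S A (\<lambda>t. F (LEAST k. t < v k) t)"
proof -
  define \<beta> where "\<beta> t = F (LEAST k. t < v k) t" for t
  have F_agree: "F k t i = F j t i" if "j \<le> k" "t \<in> {m..v j}" "i \<in> I" for j k t i
    using that(1)
  proof (induction k rule: dec_induct)
    case (step k)
    then show ?case using F_Suc[of t k i] that(2,3) v_mono[of j k] by auto
  qed simp
  have K: "t < v (LEAST k. t < v k)" if "t \<in> S" for t
    using S(2)[OF that] by (rule LeastI_ex)
  have \<beta>_eq: "\<beta> t i = F k t i" if "t \<in> S" "t < v k" "i \<in> I" for t k i
  proof -
    have "(LEAST k. t < v k) \<le> k" using that(2) by (rule Least_le)
    then show ?thesis
      unfolding \<beta>_def using F_agree K[OF that(1)] that S(1) by auto
  qed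
  have "continuous (at t within S) (\<lambda>s. \<beta> s i)" if "t \<in> S" "i \<in> I" for t i
  proof -
    define k where "k = (LEAST k. t < v k)"
    have "t < v k" using K that(1) unfolding k_def by auto
    show ?thesis
    proof (rule continuous_within_if_eq_near)
      show "continuous_on {m..v k} (\<lambda>s. F k s i)" using F that(2) unfolding lift_on_def by blast
      show "S \<inter> ball t (v k - t) \<subseteq> {m..v k}" using S(1) by (auto simp: dist_real_def)
      show "F k s i = \<beta> s i" if "s \<in> S" "dist s t < v k - t" for s
        using \<beta>_eq[of s k i] that \<open>i \<in> I\<close> by (auto simp: dist_real_def)
    qed (use that \<open>t < v k\<close> in auto)
  qed
  moreover have "entries I (\<beta> t) = A t" if "t \<in> S" for t
    using F K[OF that] that S(1) unfolding \<beta>_def lift_on_def by auto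
  ultimately show ?thesis
    unfolding \<beta>_def[symmetric] lift_on_def using continuous_on_eq_continuous_within by blast
qed

lemma lift_on_half_open_interval:
  assumes loc: "locally_liftable I C A" and "{m..<q} \<subseteq> C" "m < q" "entries I y = A m"
  shows "\<exists>\<beta>. lift_on I {m..<q} A \<beta> \<and> (\<forall>i\<in>I. \<beta> m i = y i)"
proof -
  define v where "v k = q - (q - m) / (real k + 1)" for k :: nat
  have v0: "v 0 = m" unfolding v_def by simp
  have vq: "v k < q" for k unfolding v_def using assms(3) by simp
  have v_mono: "v j \<le> v k" if "j \<le> k" for j k
    unfolding v_def using that assms(3) by (simp add: frac_le)
  have vm: "m \<le> v k" for k using v_mono[of 0 k] v0 by simp
  have "\<exists>F. \<forall>k. (lift_on I {m..v k} A (F k) \<and> (\<forall>i\<in>I. F k m i = y i)) \<and>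
      (\<forall>t\<in>{m..v k}. \<forall>i\<in>I. F (Suc k) t i = F k t i)"
  proof (rule dependent_nat_choice)
    show "\<exists>\<gamma>. lift_on I {m..v 0} A \<gamma> \<and> (\<forall>i\<in>I. \<gamma> m i = y i)"
      using lift_on_singleton[of I y A m] assms(4) v0 by auto
  next
    fix \<gamma> k assume \<gamma>: "lift_on I {m..v k} A \<gamma> \<and> (\<forall>i\<in>I. \<gamma> m i = y i)"
    have "{v k..v (Suc k)} \<subseteq> {m..<q}" using vm[of k] vq[of "Suc k"] by auto
    with assms(2) have sub: "{v k..v (Suc k)} \<subseteq> C" by blast
    have le: "v k \<le> v (Suc k)" using v_mono by simp
    have "\<exists>\<beta>. lift_on I {v k..v (Suc k)} A \<beta> \<and> (\<forall>i\<in>I. \<beta> (v k) i = z i)" if "entries I z = A (v k)" for z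
      by (rule lift_on_closed_interval[OF loc sub le that])
    with lift_on_extend[OF conjunct1[OF \<gamma>] vm le] obtain \<gamma>' where
      "lift_on I {m..v (Suc k)} A \<gamma>'" "\<forall>t\<in>{m..v k}. \<forall>i\<in>I. \<gamma>' t i = \<gamma> t i"
      by blast
    with \<gamma> vm show "\<exists>\<gamma>'. (lift_on I {m..v (Suc k)} A \<gamma>' \<and> (\<forall>i\<in>I. \<gamma>' m i = y i)) \<and>
        (\<forall>t\<in>{m..v k}. \<forall>i\<in>I. \<gamma>' t i = \<gamma> t i)"
      by auto
  qed
  then obtain F where F: "\<And>k. lift_on I {m..v k} A (F k)" "\<And>k i. i \<in> I \<Longrightarrow> F k m i = y i"
    and F_Suc: "\<And>k t i. t \<in> {m..v k} \<Longrightarrow> i \<in> I \<Longrightarrow> F (Suc k) t i = F k t i"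
    by blast
  have "\<exists>k. t < v k" if "t \<in> {m..<q}" for t
  proof -
    obtain k :: nat where "(q - m) / (q - t) < real k" using reals_Archimedean2 by blast
    then have "(q - m) / (real k + 1) < q - t" using that assms(3) by (simp add: field_simps)
    then have "t < v k" unfolding v_def by simp
    then show ?thesis ..
  qed
  then have "lift_on I {m..<q} A (\<lambda>t. F (LEAST k. t < v k) t)"
    by (intro lift_on_increasing_union[where F = F and v = v, OF F(1) F_Suc v_mono]) auto
  with F(2) show ?thesis by blast
qed

lemma lift_on_interval_right:
  assumes loc: "locally_liftable I C A" and C: "is_interval C" "bdd_above C" "m \<in> C"
    and "entries I y = A m"
  shows "\<exists>\<beta>. lift_on I (C \<inter> {m..}) A \<beta> \<and> (\<forall>i\<in>I. \<beta> m i = y i)"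
proof -
  define q where "q = Sup C"
  have le_q: "t \<le> q" if "t \<in> C" for t unfolding q_def using that C(2) by (rule cSup_upper)
  have in_C: "t \<in> C" if t: "m \<le> t" "t < q" for t
  proof -
    have "C \<noteq> {}" using C(3) by blast
    then have "\<exists>x\<in>C. t < x" using t(2) C(2) unfolding q_def by (simp add: less_cSup_iff)
    then obtain x where "x \<in> C" "t < x" by blast
    then show ?thesis using C(1) C(3) t(1) unfolding is_interval_1 by (meson less_imp_le)
  qed
  show ?thesis
  proof (cases "q \<in> C")
    case True
    then have eq: "C \<inter> {m..} = {m..q}" using in_C le_q by fastforce
    then have "{m..q} \<subseteq> C" by blast
    from lift_on_closed_interval[OF loc this le_q[OF C(3)] assms(5)] show ?thesis
      unfolding eq .
  next
    case False
    have eq: "C \<inter> {m..} = {m..<q}"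
    proof
      show "C \<inter> {m..} \<subseteq> {m..<q}" using le_q False by (force simp: le_less)
      show "{m..<q} \<subseteq> C \<inter> {m..}" using in_C by auto
    qed
    then have "{m..<q} \<subseteq> C" by blast
    moreover have "m < q" using False C(3) le_q[OF C(3)] by (cases "m = q") auto
    ultimately show ?thesis
      unfolding eq by (rule lift_on_half_open_interval[OF loc _ _ assms(5)])
  qed
qed

lemma lift_on_interval:
  assumes "locally_liftable I C A" "locally_liftable I (uminus ` C) (\<lambda>t. A (- t))"
    and "is_interval C" "bounded C" "m \<in> C" "entries I y = A m"
  shows "\<exists>\<beta>. lift_on I C A \<beta> \<and> (\<forall>i\<in>I. \<beta> m i = y i)"
proof -
  have "bdd_above C" using bounded_imp_bdd_above[OF assms(4)] .
  from lift_on_interval_right[OF assms(1,3) this assms(5,6)]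
  obtain \<beta>1 where \<beta>1: "lift_on I (C \<inter> {m..}) A \<beta>1" "\<forall>i\<in>I. \<beta>1 m i = y i"
    by blast
  have "bdd_above (uminus ` C)" using assms(4) by (simp add: bounded_imp_bdd_above bounded_imp_bdd_below)
  moreover have "- m \<in> uminus ` C" using assms(5) by simp
  moreover have "entries I y = A (- (- m))" using assms(6) by simp
  ultimately obtain \<beta>2 where \<beta>2: "lift_on I (uminus ` C \<inter> {- m..}) (\<lambda>t. A (- t)) \<beta>2" "\<forall>i\<in>I. \<beta>2 (- m) i = y i"
    using lift_on_interval_right[OF assms(2) is_interval_uminusI[OF assms(3)]] by blast
  have "uminus ` (uminus ` C \<inter> {- m..}) = C \<inter> {..m}" by force
  then have "lift_on I (C \<inter> {..m}) A (\<lambda>t. \<beta>2 (- t))"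
    using lift_on_reflect[OF \<beta>2(1)] by simp
  then have "lift_on I C A (\<lambda>t. if t \<le> m then \<beta>2 (- t) else \<beta>1 t)"
    using \<beta>1 \<beta>2(2) by (intro lift_on_glue) auto
  with \<beta>2(2) show ?thesis by (intro exI[of _ "\<lambda>t. if t \<le> m then \<beta>2 (- t) else \<beta>1 t"]) auto
qed

section \<open>Existence of lifts\<close>

definition path_liftable :: "'a::metric_space itself \<Rightarrow> 'i set \<Rightarrow> bool" where
  "path_liftable _ I \<longleftrightarrow> (\<forall>(A :: real \<Rightarrow> 'a multiset) a b y. a \<le> b \<longrightarrow> mset_continuous_on {a..b} A \<longrightarrow>
     (\<forall>t\<in>{a..b}. size (A t) = card I) \<longrightarrow> entries I y = A a \<longrightarrow>
     (\<exists>\<beta>. lift_on I {a..b} A \<beta> \<and> (\<forall>i\<in>I. \<beta> a i = y i)))"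

lemma path_liftableD:
  fixes A :: "real \<Rightarrow> 'a::metric_space multiset"
  assumes "path_liftable TYPE('a) I" "a \<le> b" "mset_continuous_on {a..b} A"
    "\<forall>t\<in>{a..b}. size (A t) = card I" "entries I y = A a"
  shows "\<exists>\<beta>. lift_on I {a..b} A \<beta> \<and> (\<forall>i\<in>I. \<beta> a i = y i)"
  using assms unfolding path_liftable_def by blast

lemma lift_on_split:
  fixes A :: "real \<Rightarrow> 'a::metric_space multiset"
  assumes IH: "\<And>J. J \<subset> I \<Longrightarrow> path_liftable TYPE('a) J" and "finite I" "s \<le> s'" "entries I y = A s"
    and cont: "mset_continuous_on {s..s'} (\<lambda>t. filter_mset Q (A t))"
      "mset_continuous_on {s..s'} (\<lambda>t. filter_mset (\<lambda>z. \<not> Q z) (A t))"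
    and size: "\<forall>t\<in>{s..s'}. size (filter_mset Q (A t)) = size (filter_mset Q (A s))"
      "\<forall>t\<in>{s..s'}. size (filter_mset (\<lambda>z. \<not> Q z) (A t)) = size (filter_mset (\<lambda>z. \<not> Q z) (A s))"
    and "\<exists>z\<in>#A s. Q z" "\<exists>z\<in>#A s. \<not> Q z"
  shows "\<exists>\<beta>. lift_on I {s..s'} A \<beta> \<and> (\<forall>i\<in>I. \<beta> s i = y i)"
proof -
  define J1 where "J1 = {i\<in>I. Q (y i)}"
  define J2 where "J2 = {i\<in>I. \<not> Q (y i)}"
  have y1: "entries J1 y = filter_mset Q (A s)"
    using filter_entries[OF \<open>finite I\<close>, of Q y] assms(4) unfolding J1_def by simp
  have y2: "entries J2 y = filter_mset (\<lambda>z. \<not> Q z) (A s)"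
    using filter_entries[OF \<open>finite I\<close>, of "\<lambda>z. \<not> Q z" y] assms(4) unfolding J2_def by simp
  have "J1 \<noteq> {}" "J2 \<noteq> {}"
    using y1 y2 assms(9,10) by (auto simp: entries_def)
  moreover have "J1 \<union> J2 = I" "J1 \<inter> J2 = {}" unfolding J1_def J2_def by auto
  ultimately have "J1 \<subset> I" "J2 \<subset> I" by auto
  have "size (filter_mset Q (A t)) = card J1" if "t \<in> {s..s'}" for t
  proof -
    have "size (filter_mset Q (A t)) = size (filter_mset Q (A s))" using size(1) that by blast
    also have "\<dots> = card J1" using arg_cong[OF y1, of size] by simp
    finally show ?thesis .
  qed
  with path_liftableD[OF IH[OF \<open>J1 \<subset> I\<close>] \<open>s \<le> s'\<close>, where A = "\<lambda>t. filter_mset Q (A t)"] cont(1) y1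
  obtain \<beta>1 where "lift_on J1 {s..s'} (\<lambda>t. filter_mset Q (A t)) \<beta>1" "\<forall>i\<in>J1. \<beta>1 s i = y i"
    by blast
  moreover have "size (filter_mset (\<lambda>z. \<not> Q z) (A t)) = card J2" if "t \<in> {s..s'}" for t
  proof -
    have "size (filter_mset (\<lambda>z. \<not> Q z) (A t)) = size (filter_mset (\<lambda>z. \<not> Q z) (A s))" using size(2) that by blast
    also have "\<dots> = card J2" using arg_cong[OF y2, of size] by simp
    finally show ?thesis .
  qed
  with path_liftableD[OF IH[OF \<open>J2 \<subset> I\<close>] \<open>s \<le> s'\<close>, where A = "\<lambda>t. filter_mset (\<lambda>z. \<not> Q z) (A t)"] cont(2) y2
  obtain \<beta>2 where "lift_on J2 {s..s'} (\<lambda>t. filter_mset (\<lambda>z. \<not> Q z) (A t)) \<beta>2" "\<forall>i\<in>J2. \<beta>2 s i = y i"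
    by blast
  ultimately show ?thesis
    unfolding J1_def J2_def by (rule lift_on_filter_partition[of I y A s Q, OF \<open>finite I\<close> assms(4)])
qed

lemma cluster_split_near:
  fixes A :: "real \<Rightarrow> 'a::metric_space multiset"
  assumes A: "mset_continuous_on S A" and "t0 \<in> S" and cd: "c \<in># A t0" "d \<in># A t0" "c \<noteq> d"
  obtains \<delta> Q where "\<delta> > 0" "Q c" "\<not> Q d"
    and "mset_continuous_on (S \<inter> {t0 - \<delta><..<t0 + \<delta>}) (\<lambda>t. filter_mset Q (A t))"
    and "mset_continuous_on (S \<inter> {t0 - \<delta><..<t0 + \<delta>}) (\<lambda>t. filter_mset (\<lambda>z. \<not> Q z) (A t))"
    and "\<And>t. t \<in> S \<inter> {t0 - \<delta><..<t0 + \<delta>} \<Longrightarrow> size (filter_mset Q (A t)) = size (filter_mset Q (A t0))"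
    and "\<And>t. t \<in> S \<inter> {t0 - \<delta><..<t0 + \<delta>} \<Longrightarrow>
      size (filter_mset (\<lambda>z. \<not> Q z) (A t)) = size (filter_mset (\<lambda>z. \<not> Q z) (A t0))"
proof -
  obtain r where "r > 0" and sep: "\<And>u v. u \<in># A t0 \<Longrightarrow> v \<in># A t0 \<Longrightarrow> u \<noteq> v \<Longrightarrow> r \<le> dist u v"
    using separating_radius[of "set_mset (A t0)"] by blast
  then have r: "r > 0" "\<And>e. e \<in># A t0 \<Longrightarrow> e \<noteq> c \<Longrightarrow> r \<le> dist c e"
    using cd(1) by auto
  have "r / 4 > 0" using r(1) by simp
  with A \<open>t0 \<in> S\<close> obtain \<delta> where \<delta>: "\<delta> > 0"
    "\<forall>s\<in>S. \<bar>s - t0\<bar> < \<delta> \<longrightarrow> matched_within (r / 4) (A t0) (A s)"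
    unfolding mset_continuous_on_def by blast
  define N where "N = S \<inter> {t0 - \<delta><..<t0 + \<delta>}"
  have "N \<subseteq> S" "t0 \<in> N" unfolding N_def using \<open>t0 \<in> S\<close> \<delta>(1) by auto
  have near: "matched_within (r / 4) (A t0) (A t)" if "t \<in> N" for t
    using \<delta>(2) that unfolding N_def by (simp add: abs_diff_less_iff)
  define Q where "Q z \<longleftrightarrow> dist z c < r / 2" for z
  text \<open>No point of \<open>A t\<close> lies at distance between \<open>r/4\<close> and \<open>3r/4\<close> from \<open>c\<close>, so \<open>Q\<close> cannot
    change along a matching edge.\<close>
  have Q_stable: "Q z \<longleftrightarrow> Q w"
    if "t \<in> N" "u \<in> N" "z \<in># A t" "w \<in># A u" "dist z w < r / 4" for t u z w
  proof -
    have "dist z c < r / 4 \<or> 3 * r / 4 < dist z c" "dist w c < r / 4 \<or> 3 * r / 4 < dist w c"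
      using matched_within_gap[OF near r(2) cd(1)] that by blast+
    moreover have "dist z c \<le> dist z w + dist w c" "dist w c \<le> dist z w + dist z c"
      using dist_triangle[of z c w] dist_triangle[of w c z] by (simp_all add: dist_commute)
    ultimately show ?thesis unfolding Q_def using that(5) by linarith
  qed
  have cont: "mset_continuous_on N (\<lambda>t. filter_mset P (A t))"
    if "P = Q \<or> P = (\<lambda>z. \<not> Q z)" for P
    using mset_continuous_on_subset[OF A \<open>N \<subseteq> S\<close>] \<open>r / 4 > 0\<close>
    by (rule mset_continuous_on_filter) (use Q_stable that in blast)
  have size: "size (filter_mset P (A t)) = size (filter_mset P (A t0))"
    if "t \<in> N" "P = Q \<or> P = (\<lambda>z. \<not> Q z)" for t P
  proof -
    have "matched_within (r / 4) (filter_mset P (A t0)) (filter_mset P (A t))"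
      by (rule matched_within_filter[OF near[OF that(1)]]) (use Q_stable \<open>t0 \<in> N\<close> that in blast)
    then show ?thesis by (simp add: size_matched_within)
  qed
  have "Q c" unfolding Q_def using r(1) by simp
  moreover have "\<not> Q d" using r(2)[OF cd(2)] cd(3) r(1) unfolding Q_def by (simp add: dist_commute)
  ultimately show thesis
    using that[of \<delta> Q] \<delta>(1) cont size unfolding N_def by blast
qed

text \<open>Near a time where \<open>A\<close> has two distinct points, the points of \<open>A\<close> split into a cluster
  and the rest; both parts have fewer points and are lifted separately.\<close>
lemma locally_liftable_nonconcentrated:
  fixes A :: "real \<Rightarrow> 'a::metric_space multiset"
  assumes IH: "\<And>J. J \<subset> I \<Longrightarrow> path_liftable TYPE('a) J" and "finite I"
    and A: "mset_continuous_on S A" "\<forall>t\<in>S. \<not> concentrated (A t)"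
  shows "locally_liftable I S A"
  unfolding locally_liftable_def
proof
  fix t0 assume "t0 \<in> S"
  then obtain c d where cd: "c \<in># A t0" "d \<in># A t0" "c \<noteq> d"
    using A(2) unfolding concentrated_def by blast
  obtain \<delta> Q where "\<delta> > 0" "Q c" "\<not> Q d"
    and cont: "mset_continuous_on (S \<inter> {t0 - \<delta><..<t0 + \<delta>}) (\<lambda>t. filter_mset Q (A t))"
      "mset_continuous_on (S \<inter> {t0 - \<delta><..<t0 + \<delta>}) (\<lambda>t. filter_mset (\<lambda>z. \<not> Q z) (A t))"
    and size: "\<And>t. t \<in> S \<inter> {t0 - \<delta><..<t0 + \<delta>} \<Longrightarrow> size (filter_mset Q (A t)) = size (filter_mset Q (A t0))"
      "\<And>t. t \<in> S \<inter> {t0 - \<delta><..<t0 + \<delta>} \<Longrightarrow>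
        size (filter_mset (\<lambda>z. \<not> Q z) (A t)) = size (filter_mset (\<lambda>z. \<not> Q z) (A t0))"
    by (rule cluster_split_near[OF A(1) \<open>t0 \<in> S\<close> cd that])
  show "\<exists>\<delta>>0. \<forall>s s' y. s \<le> s' \<longrightarrow> {s..s'} \<subseteq> S \<inter> {t0 - \<delta><..<t0 + \<delta>} \<longrightarrow> entries I y = A s \<longrightarrow>
      (\<exists>\<beta>. lift_on I {s..s'} A \<beta> \<and> (\<forall>i\<in>I. \<beta> s i = y i))"
  proof (intro exI[of _ \<delta>] conjI allI impI)
    fix s s' y assume ss: "s \<le> s'" "{s..s'} \<subseteq> S \<inter> {t0 - \<delta><..<t0 + \<delta>}" and y: "entries I y = A s"
    then have s: "s \<in> S \<inter> {t0 - \<delta><..<t0 + \<delta>}" by auto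
    show "\<exists>\<beta>. lift_on I {s..s'} A \<beta> \<and> (\<forall>i\<in>I. \<beta> s i = y i)"
    proof (rule lift_on_split[where A = A and Q = Q, OF IH \<open>finite I\<close> ss(1) y])
      show "mset_continuous_on {s..s'} (\<lambda>t. filter_mset Q (A t))"
        "mset_continuous_on {s..s'} (\<lambda>t. filter_mset (\<lambda>z. \<not> Q z) (A t))"
        using mset_continuous_on_subset[OF cont(1) ss(2)] mset_continuous_on_subset[OF cont(2) ss(2)] .
      show "\<forall>t\<in>{s..s'}. size (filter_mset Q (A t)) = size (filter_mset Q (A s))"
        "\<forall>t\<in>{s..s'}. size (filter_mset (\<lambda>z. \<not> Q z) (A t)) = size (filter_mset (\<lambda>z. \<not> Q z) (A s))"
        using size ss(2) s by (metis subsetD)+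
      have "size (filter_mset Q (A s)) \<noteq> 0" "size (filter_mset (\<lambda>z. \<not> Q z) (A s)) \<noteq> 0"
        using size[OF s] cd(1,2) \<open>Q c\<close> \<open>\<not> Q d\<close> by auto
      then show "\<exists>z\<in>#A s. Q z" "\<exists>z\<in>#A s. \<not> Q z" by auto
    qed
  qed (rule \<open>\<delta> > 0\<close>)
qed

lemma lift_on_nonconcentrated_interval:
  fixes A :: "real \<Rightarrow> 'a::metric_space multiset"
  assumes IH: "\<And>J. J \<subset> I \<Longrightarrow> path_liftable TYPE('a) J" and "finite I"
    and "mset_continuous_on C A" "\<forall>t\<in>C. \<not> concentrated (A t)"
    and "is_interval C" "bounded C" "m \<in> C" "entries I y = A m"
  shows "\<exists>\<beta>. lift_on I C A \<beta> \<and> (\<forall>i\<in>I. \<beta> m i = y i)"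
proof (rule lift_on_interval[where A = A, OF _ _ assms(5-8)])
  show "locally_liftable I C A"
    by (rule locally_liftable_nonconcentrated[OF IH assms(2-4)])
  have "\<forall>t\<in>uminus ` C. \<not> concentrated (A (- t))" using assms(4) by auto
  with locally_liftable_nonconcentrated[OF IH assms(2) mset_continuous_on_reflect[OF assms(3)]]
  show "locally_liftable I (uminus ` C) (\<lambda>t. A (- t))" by simp
qed

lemma lifts_on_components:
  fixes A :: "real \<Rightarrow> 'a::metric_space multiset"
  assumes IH: "\<And>J. J \<subset> I \<Longrightarrow> path_liftable TYPE('a) J" and "finite I"
    and A: "mset_continuous_on {a..b} A" "\<forall>t\<in>{a..b}. size (A t) = card I" and y: "entries I y = A a"
    and U: "U \<subseteq> {a..b}" "\<forall>t\<in>U. \<not> concentrated (A t)"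
  obtains L where "\<And>t. t \<in> U \<Longrightarrow> lift_on I (connected_component_set U t) A (L t)"
    and "a \<in> U \<Longrightarrow> \<forall>i\<in>I. L a a i = y i"
    and "\<And>s t. s \<in> connected_component_set U t \<Longrightarrow> L s = L t"
proof -
  define L where "L t = (SOME \<gamma>. lift_on I (connected_component_set U t) A \<gamma> \<and>
    (a \<in> connected_component_set U t \<longrightarrow> (\<forall>i\<in>I. \<gamma> a i = y i)))" for t
  have L: "lift_on I (connected_component_set U t) A (L t) \<and>
      (a \<in> connected_component_set U t \<longrightarrow> (\<forall>i\<in>I. L t a i = y i))" if "t \<in> U" for t
  proof -
    let ?C = "connected_component_set U t"
    have "?C \<subseteq> U" by (rule connected_component_subset)
    with U(1) have "?C \<subseteq> {a..b}" by blast
    then have C: "mset_continuous_on ?C A" "\<forall>s\<in>?C. \<not> concentrated (A s)" "is_interval ?C" "bounded ?C"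
      using mset_continuous_on_subset[OF A(1)] \<open>?C \<subseteq> U\<close> U(2) is_interval_connected_1
        bounded_subset[OF bounded_closed_interval]
      by auto
    have "\<exists>\<gamma>. lift_on I ?C A \<gamma> \<and> (a \<in> ?C \<longrightarrow> (\<forall>i\<in>I. \<gamma> a i = y i))"
    proof (cases "a \<in> ?C")
      case True
      then show ?thesis using lift_on_nonconcentrated_interval[OF IH \<open>finite I\<close> C True y] by blast
    next
      case False
      have "t \<in> ?C" "t \<in> {a..b}" using that U(1) by auto
      moreover obtain x where "entries I x = A t" using entries_surj[OF \<open>finite I\<close>] A(2) \<open>t \<in> {a..b}\<close> by blast
      ultimately show ?thesis using lift_on_nonconcentrated_interval[OF IH \<open>finite I\<close> C] False by blast
    qed
    then show ?thesis unfolding L_def by (rule someI_ex)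
  qed
  show thesis
  proof (rule that)
    show "lift_on I (connected_component_set U t) A (L t)" if "t \<in> U" for t using L[OF that] by blast
    show "\<forall>i\<in>I. L a a i = y i" if "a \<in> U" using L[OF that] that by simp
    show "L s = L t" if "s \<in> connected_component_set U t" for s t
      unfolding L_def connected_component_eq[OF that] ..
  qed
qed

lemma interval_ball_subset_connected_component:
  fixes S U :: "real set"
  assumes "is_interval S" "t \<in> S" "S \<inter> ball t d \<subseteq> U"
  shows "S \<inter> ball t d \<subseteq> connected_component_set U t"
proof
  fix s assume s: "s \<in> S \<inter> ball t d"
  have "dist t s < d" using s by simp
  then have "0 < d" by (rule le_less_trans[OF zero_le_dist])
  then have "t \<in> S \<inter> ball t d" using assms(2) by simp
  moreover have "connected (S \<inter> ball t d)"
    using assms(1) by (intro convex_connected convex_Int) (auto simp: is_interval_convex_1)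
  ultimately show "s \<in> connected_component_set U t" using s assms(3) by (auto intro: connected_componentI)
qed

text \<open>Where \<open>A\<close> is a single repeated point any choice of indices is a lift, and it is
  automatically continuous there.\<close>
lemma lift_on_patch_components:
  fixes A :: "real \<Rightarrow> 'a::metric_space multiset"
  assumes "finite I" and A: "mset_continuous_on {a..b} A" "\<forall>t\<in>{a..b}. size (A t) = card I"
    and U: "U = {t \<in> {a..b}. \<not> concentrated (A t)}"
    and L: "\<And>t. t \<in> U \<Longrightarrow> lift_on I (connected_component_set U t) A (L t)"
    and L_eq: "\<And>s t. s \<in> connected_component_set U t \<Longrightarrow> L s = L t"
  shows "lift_on I {a..b} A (\<lambda>t. if t \<in> U then L t t else (\<lambda>i. SOME c. c \<in># A t))"
proof -
  define \<beta> where "\<beta> t = (if t \<in> U then L t t else (\<lambda>i. SOME c. c \<in># A t))" for t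
  have entries: "\<forall>t\<in>{a..b}. entries I (\<beta> t) = A t"
  proof
    fix t assume t: "t \<in> {a..b}"
    show "entries I (\<beta> t) = A t"
    proof (cases "t \<in> U")
      case True
      then show ?thesis using L[OF True] unfolding \<beta>_def lift_on_def by simp
    next
      case False
      with t have "concentrated (A t)" unfolding U by simp
      with A(2) t show ?thesis unfolding \<beta>_def using False by (simp add: entries_concentrated)
    qed
  qed
  have "continuous (at t within {a..b}) (\<lambda>s. \<beta> s i)" if t: "t \<in> {a..b}" and "i \<in> I" for t i
  proof (cases "t \<in> U")
    case False
    with t have "concentrated (A t)" unfolding U by simp
    from continuous_within_concentrated[OF A(1) t this \<open>finite I\<close> \<open>i \<in> I\<close> entries] show ?thesis .
  next
    case True
    with A(1) t obtain d where d: "d > 0" "\<And>s. s \<in> {a..b} \<Longrightarrow> \<bar>s - t\<bar> < d \<Longrightarrow> \<not> concentrated (A s)"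
      using nonconcentrated_near unfolding U by blast
    have "{a..b} \<inter> ball t d \<subseteq> U" using d(2) unfolding U by (auto simp: dist_real_def)
    then have near: "{a..b} \<inter> ball t d \<subseteq> connected_component_set U t"
      using interval_ball_subset_connected_component[OF is_interval_cc t] by blast
    show ?thesis
    proof (rule continuous_within_if_eq_near[OF _ t d(1) near])
      show "continuous_on (connected_component_set U t) (\<lambda>s. L t s i)"
        using L[OF True] \<open>i \<in> I\<close> unfolding lift_on_def by blast
      show "L t s i = \<beta> s i" if "s \<in> {a..b}" "dist s t < d" for s
      proof -
        have "s \<in> connected_component_set U t" using near that by (auto simp: dist_commute)
        then show ?thesis unfolding \<beta>_def using L_eq connected_component_subset by fastforce
      qed
    qed
  qed
  with entries show ?thesis
    unfolding \<beta>_def[symmetric] lift_on_def continuous_on_eq_continuous_within by blast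
qed

lemma path_liftable_psubset:
  assumes IH: "\<And>J. J \<subset> I \<Longrightarrow> path_liftable TYPE('a::metric_space) J" and "finite I"
  shows "path_liftable TYPE('a) I"
  unfolding path_liftable_def
proof (intro allI impI)
  fix A :: "real \<Rightarrow> 'a multiset" and a b :: real and y
  assume "a \<le> b" and A: "mset_continuous_on {a..b} A" "\<forall>t\<in>{a..b}. size (A t) = card I"
    and y: "entries I y = A a"
  define U where "U = {t \<in> {a..b}. \<not> concentrated (A t)}"
  have U: "U \<subseteq> {a..b}" "\<forall>t\<in>U. \<not> concentrated (A t)" unfolding U_def by auto
  obtain L where L: "\<And>t. t \<in> U \<Longrightarrow> lift_on I (connected_component_set U t) A (L t)"
    and L_a: "a \<in> U \<Longrightarrow> \<forall>i\<in>I. L a a i = y i"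
    and L_eq: "\<And>s t. s \<in> connected_component_set U t \<Longrightarrow> L s = L t"
    by (rule lifts_on_components[OF IH \<open>finite I\<close> A y U that])
  define \<beta> where "\<beta> t = (if t \<in> U then L t t else (\<lambda>i. SOME c. c \<in># A t))" for t
  have "lift_on I {a..b} A \<beta>"
    unfolding \<beta>_def by (rule lift_on_patch_components[OF \<open>finite I\<close> A U_def L L_eq])
  moreover have "\<forall>i\<in>I. \<beta> a i = y i"
  proof (cases "a \<in> U")
    case True
    then show ?thesis unfolding \<beta>_def using L_a by simp
  next
    case False
    with \<open>a \<le> b\<close> have "concentrated (A a)" unfolding U_def by simp
    with False show ?thesis unfolding \<beta>_def using concentrated_entry[OF \<open>finite I\<close> _ y] by simp
  qed
  ultimately show "\<exists>\<beta>. lift_on I {a..b} A \<beta> \<and> (\<forall>i\<in>I. \<beta> a i = y i)" by blast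
qed

lemma path_liftable: "finite I \<Longrightarrow> path_liftable TYPE('a::metric_space) I"
  by (induction I rule: finite_psubset_induct) (rule path_liftable_psubset)

section \<open>Uniqueness of lifts\<close>

text \<open>Each point \<open>x\<^sub>k i\<close> determines the value \<open>y i\<close> as the unique point of \<open>y ` I\<close> within \<open>r/2\<close>;
  this map from \<open>x\<^sub>1 ` I\<close> onto \<open>y ` I\<close> is injective by counting.\<close>
lemma labelings_eq_if_close:
  fixes x1 x2 y :: "'i \<Rightarrow> 'a::metric_space"
  assumes "finite I" "x1 ` I = x2 ` I" "card (x1 ` I) \<le> card (y ` I)"
    and sep: "\<And>u v. u \<in> y ` I \<Longrightarrow> v \<in> y ` I \<Longrightarrow> u \<noteq> v \<Longrightarrow> r \<le> dist u v"
    and close: "\<And>j. j \<in> I \<Longrightarrow> dist (x1 j) (y j) < r / 2 \<and> dist (x2 j) (y j) < r / 2"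
    and "i \<in> I"
  shows "x1 i = x2 i"
proof -
  define g where "g w = (SOME v. v \<in> y ` I \<and> dist w v < r / 2)" for w
  have g: "g w = v" if "v \<in> y ` I" "dist w v < r / 2" for w v
  proof -
    have gw: "g w \<in> y ` I" "dist w (g w) < r / 2"
      unfolding g_def by (rule someI2[of _ v], use that in auto)+
    have "dist v (g w) \<le> dist v w + dist w (g w)" by (rule dist_triangle)
    with that(2) gw(2) have "dist v (g w) < r" by (simp add: dist_commute)
    with sep[OF that(1) gw(1)] show ?thesis by force
  qed
  have g_index: "g (x1 j) = y j" "g (x2 j) = y j" if "j \<in> I" for j
  proof -
    have "y j \<in> y ` I" using that by blast
    then show "g (x1 j) = y j" "g (x2 j) = y j"
      by (rule g, use close[OF that] in simp)+
  qed
  have "g ` (x1 ` I) = y ` I" using g_index by force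
  with assms(1,3) have "inj_on g (x1 ` I)"
    by (metis card_image_le eq_card_imp_inj_on finite_imageI le_antisym)
  moreover have "x1 i \<in> x1 ` I" "x2 i \<in> x1 ` I" using assms(2) \<open>i \<in> I\<close> by auto
  ultimately show ?thesis using g_index[OF \<open>i \<in> I\<close>] by (metis inj_onD)
qed

lemma lifts_agree_right_of:
  fixes \<beta>1 \<beta>2 :: "real \<Rightarrow> 'i \<Rightarrow> 'a::metric_space"
  assumes "finite I" "lift_on I S A \<beta>1" "lift_on I S A \<beta>2" "\<tau> \<in> S" "\<forall>i\<in>I. \<beta>1 \<tau> i = \<beta>2 \<tau> i"
    and card: "\<And>t. t \<in> S \<Longrightarrow> \<tau> \<le> t \<Longrightarrow> card (set_mset (A t)) \<le> card (set_mset (A \<tau>))"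
  shows "\<exists>\<eta>>0. \<forall>t\<in>S. \<tau> \<le> t \<longrightarrow> t < \<tau> + \<eta> \<longrightarrow> (\<forall>i\<in>I. \<beta>1 t i = \<beta>2 t i)"
proof -
  have points: "set_mset (A t) = \<beta>1 t ` I" "set_mset (A t) = \<beta>2 t ` I" if "t \<in> S" for t
  proof -
    have "A t = entries I (\<beta>1 t)" "A t = entries I (\<beta>2 t)"
      using assms(2,3) that unfolding lift_on_def by simp_all
    then show "set_mset (A t) = \<beta>1 t ` I" "set_mset (A t) = \<beta>2 t ` I"
      by (metis set_mset_entries[OF assms(1)])+
  qed
  obtain r where r: "r > 0" "\<And>u v. u \<in> \<beta>1 \<tau> ` I \<Longrightarrow> v \<in> \<beta>1 \<tau> ` I \<Longrightarrow> u \<noteq> v \<Longrightarrow> r \<le> dist u v"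
    using separating_radius[of "\<beta>1 \<tau> ` I"] assms(1) by blast
  have "\<forall>i\<in>I. \<forall>\<^sub>F t in at \<tau> within S. dist (\<beta>1 t i) (\<beta>1 \<tau> i) < r / 2 \<and> dist (\<beta>2 t i) (\<beta>1 \<tau> i) < r / 2"
  proof
    fix i assume "i \<in> I"
    with assms(2-4) have "((\<lambda>t. \<beta>1 t i) \<longlongrightarrow> \<beta>1 \<tau> i) (at \<tau> within S)" "((\<lambda>t. \<beta>2 t i) \<longlongrightarrow> \<beta>2 \<tau> i) (at \<tau> within S)"
      unfolding lift_on_def continuous_on_def by blast+
    moreover have "\<beta>2 \<tau> i = \<beta>1 \<tau> i" using assms(5) \<open>i \<in> I\<close> by simp
    ultimately have "((\<lambda>t. \<beta>1 t i) \<longlongrightarrow> \<beta>1 \<tau> i) (at \<tau> within S)" "((\<lambda>t. \<beta>2 t i) \<longlongrightarrow> \<beta>1 \<tau> i) (at \<tau> within S)"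
      by simp_all
    with r(1) show "\<forall>\<^sub>F t in at \<tau> within S. dist (\<beta>1 t i) (\<beta>1 \<tau> i) < r / 2 \<and> dist (\<beta>2 t i) (\<beta>1 \<tau> i) < r / 2"
      by (intro eventually_conj tendstoD) auto
  qed
  then have "\<forall>\<^sub>F t in at \<tau> within S. \<forall>i\<in>I. dist (\<beta>1 t i) (\<beta>1 \<tau> i) < r / 2 \<and> dist (\<beta>2 t i) (\<beta>1 \<tau> i) < r / 2"
    by (rule eventually_ball_finite[OF assms(1)])
  then obtain \<eta> where \<eta>: "\<eta> > 0" and close: "\<And>t i. t \<in> S \<Longrightarrow> t \<noteq> \<tau> \<Longrightarrow> dist t \<tau> < \<eta> \<Longrightarrow> i \<in> I \<Longrightarrow>
      dist (\<beta>1 t i) (\<beta>1 \<tau> i) < r / 2 \<and> dist (\<beta>2 t i) (\<beta>1 \<tau> i) < r / 2"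
    unfolding eventually_at by blast
  have "\<beta>1 t i = \<beta>2 t i" if t: "t \<in> S" "\<tau> < t" "t < \<tau> + \<eta>" and "i \<in> I" for t i
  proof (rule labelings_eq_if_close[OF assms(1) _ _ r(2) _ \<open>i \<in> I\<close>])
    show "\<beta>1 t ` I = \<beta>2 t ` I" using points[OF t(1)] by simp
    show "card (\<beta>1 t ` I) \<le> card (\<beta>1 \<tau> ` I)" using card[OF t(1)] t(2) points t(1) assms(4) by simp
    show "dist (\<beta>1 t j) (\<beta>1 \<tau> j) < r / 2 \<and> dist (\<beta>2 t j) (\<beta>1 \<tau> j) < r / 2" if "j \<in> I" for j
      using close[OF t(1) _ _ that] t by (simp add: dist_real_def)
  qed
  with \<eta> assms(5) show ?thesis by (metis order_le_less)
qed

lemma lifts_unique: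
  fixes \<beta>1 \<beta>2 :: "real \<Rightarrow> 'i \<Rightarrow> 'a::metric_space"
  assumes "finite I" "a \<le> b" "lift_on I {a..b} A \<beta>1" "lift_on I {a..b} A \<beta>2" "\<forall>i\<in>I. \<beta>1 a i = \<beta>2 a i"
    and card: "\<And>s t. a \<le> s \<Longrightarrow> s \<le> t \<Longrightarrow> t \<le> b \<Longrightarrow> card (set_mset (A t)) \<le> card (set_mset (A s))"
  shows "\<forall>t\<in>{a..b}. \<forall>i\<in>I. \<beta>1 t i = \<beta>2 t i"
proof -
  define P where "P w \<longleftrightarrow> (\<forall>t\<in>{a..w}. \<forall>i\<in>I. \<beta>1 t i = \<beta>2 t i)" for w
  have "\<forall>w\<in>{a..b}. P w"
  proof (rule real_interval_induct[OF \<open>a \<le> b\<close>])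
    show "P a" unfolding P_def using assms(5) by simp
  next
    fix t assume t: "a \<le> t" "t < b" "P t"
    then have "\<forall>i\<in>I. \<beta>1 t i = \<beta>2 t i" "t \<in> {a..b}" unfolding P_def by simp_all
    moreover have "card (set_mset (A s)) \<le> card (set_mset (A t))" if "s \<in> {a..b}" "t \<le> s" for s
      using card t(1) that by simp
    ultimately obtain \<eta> where \<eta>: "\<eta> > 0" "\<forall>s\<in>{a..b}. t \<le> s \<longrightarrow> s < t + \<eta> \<longrightarrow> (\<forall>i\<in>I. \<beta>1 s i = \<beta>2 s i)"
      using lifts_agree_right_of[OF assms(1,3,4)] by blast
    have "P s" if s: "t < s" "s < t + \<eta>" "s \<le> b" for s
      unfolding P_def
    proof (intro ballI)
      fix r i assume r: "r \<in> {a..s}" and "i \<in> I"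
      show "\<beta>1 r i = \<beta>2 r i"
      proof (cases "r \<le> t")
        case True
        then show ?thesis using \<open>P t\<close> r \<open>i \<in> I\<close> unfolding P_def by auto
      next
        case False
        then show ?thesis using \<eta>(2) r s t \<open>i \<in> I\<close> by auto
      qed
    qed
    with \<eta>(1) show "\<exists>d>0. \<forall>s. t < s \<longrightarrow> s < t + d \<longrightarrow> s \<le> b \<longrightarrow> P s" by blast
  next
    fix t assume t: "a < t" "t \<le> b" and before: "\<And>s. a \<le> s \<Longrightarrow> s < t \<Longrightarrow> P s"
    have "\<beta>1 t i = \<beta>2 t i" if "i \<in> I" for i
    proof -
      have "closed {s \<in> {a..b}. dist (\<beta>1 s i) (\<beta>2 s i) = 0}"
        using assms(3,4) that unfolding lift_on_def
        by (intro continuous_closed_preimage_constant continuous_on_dist) auto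
      moreover have "{a..<t} \<subseteq> {s \<in> {a..b}. dist (\<beta>1 s i) (\<beta>2 s i) = 0}"
        using before that t(2) unfolding P_def by fastforce
      ultimately have "closure {a..<t} \<subseteq> {s \<in> {a..b}. dist (\<beta>1 s i) (\<beta>2 s i) = 0}"
        by (rule closure_minimal[rotated])
      moreover have "t \<in> closure {a..<t}" using t(1) by simp
      ultimately have "t \<in> {s \<in> {a..b}. dist (\<beta>1 s i) (\<beta>2 s i) = 0}" by (rule subsetD)
      then show ?thesis by simp
    qed
    moreover have "\<beta>1 r i = \<beta>2 r i" if "r \<in> {a..<t}" "i \<in> I" for r i
      using before[of r] that unfolding P_def by auto
    ultimately show "P t" unfolding P_def by (metis atLeastAtMost_iff atLeastLessThan_iff order_le_less)
  qed
  with assms(2) show ?thesis unfolding P_def by auto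
qed

lemma size_le_size_sum_mset: "{#} \<notin># P \<Longrightarrow> size P \<le> size (sum_mset P)"
proof (induction P)
  case (add X P)
  then have "X \<noteq> {#}" "size P \<le> size (sum_mset P)" by auto
  then show ?case by (simp add: Suc_leI nonempty_has_size)
qed simp

lemma card_set_mset_le_if_partition_le:
  assumes "partition_le (Shape M) (Shape N)"
  shows "card (set_mset N) \<le> card (set_mset M)"
proof -
  obtain P :: "nat multiset multiset" where P: "{#} \<notin># P" "sum_mset P = Shape M" "image_mset sum_mset P = Shape N"
    using assms unfolding partition_le_def by blast
  have "card (set_mset N) = size P" using arg_cong[OF P(3), of size] by (simp add: Shape_def)
  also have "\<dots> \<le> size (sum_mset P)" using P(1) by (rule size_le_size_sum_mset)
  also have "\<dots> = card (set_mset M)" using P(2) by (simp add: Shape_def)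
  finally show ?thesis .
qed

section \<open>Paths in \<open>Mult\<^sub>n(\<complex>)\<close>\<close>

lemma Mult_eq_entries: "Mult x = entries UNIV (($) x)"
  by (simp add: Mult_def entries_def)

lemma open_matched_within_entries:
  fixes M :: "'a::metric_space multiset"
  shows "open {w :: 'a ^ 'n. matched_within e M (entries UNIV (($) w))}"
  unfolding open_dist
proof (intro ballI)
  fix w0 :: "'a ^ 'n" assume "w0 \<in> {w. matched_within e M (entries UNIV (($) w))}"
  then obtain v where v: "entries UNIV v = M" "\<And>i. dist (w0 $ i) (v i) < e"
    using matched_within_entries[OF finite_class.finite_UNIV matched_within_sym] by blast
  define \<eta> where "\<eta> = Min (range (\<lambda>i. e - dist (w0 $ i) (v i)))"
  have "\<eta> > 0" unfolding \<eta>_def using v(2) by (subst Min_gr_iff) auto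
  moreover have "matched_within e M (entries UNIV (($) w))" if "dist w w0 < \<eta>" for w
  proof -
    have "dist (v i) (w $ i) < e" for i
    proof -
      have "dist (v i) (w $ i) \<le> dist (w0 $ i) (v i) + dist w w0"
        using dist_triangle[of "v i" "w $ i" "w0 $ i"] dist_vec_nth_le[of w i w0]
        by (simp add: dist_commute)
      moreover have "\<eta> \<le> e - dist (w0 $ i) (v i)" unfolding \<eta>_def by (rule Min_le) auto
      ultimately show ?thesis using that by linarith
    qed
    then show ?thesis
      unfolding matched_within_def v(1)[symmetric] entries_def
      by (intro exI[of _ "image_mset (\<lambda>i. (v i, w $ i)) (mset_set UNIV)"])
        (auto simp: multiset.map_comp o_def)
  qed
  ultimately show "\<exists>\<eta>>0. \<forall>w. dist w w0 < \<eta> \<longrightarrow> w \<in> {w. matched_within e M (entries UNIV (($) w))}"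
    by blast
qed

lemma lift_on_iff_path:
  "lift_on UNIV {0..1} \<alpha> (\<lambda>t. ($) (\<beta> t)) \<longleftrightarrow> path \<beta> \<and> (\<forall>t\<in>{0..1}. Mult (\<beta> t) = \<alpha> t)"
proof -
  have "path \<beta> \<longleftrightarrow> (\<forall>i. continuous_on {0..1} (\<lambda>t. \<beta> t $ i))"
    unfolding path_def using continuous_on_component continuous_on_vec_lambda[of "{0..1}" "\<lambda>i t. \<beta> t $ i"]
    by auto
  then show ?thesis unfolding lift_on_def Mult_eq_entries by simp
qed

lemma mset_continuous_on_Mult_top:
  assumes "continuous_map (top_of_set S) (Mult_top TYPE('n::finite)) \<alpha>"
  shows "mset_continuous_on S \<alpha>" "\<forall>t\<in>S. size (\<alpha> t) = CARD('n)"
proof -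
  have open_Mult_top: "openin (Mult_top TYPE('n)) = mult_open TYPE('n)"
    unfolding Mult_top_def by (rule topology_inverse'[OF istopology_mult_open])
  have in_range: "\<alpha> t \<in> range (Mult :: complex ^ 'n \<Rightarrow> _)" if "t \<in> S" for t
  proof -
    have "\<alpha> t \<in> topspace (Mult_top TYPE('n))"
      using continuous_map_image_subset_topspace[OF assms] that by auto
    then show ?thesis unfolding topspace_def open_Mult_top mult_open_def by blast
  qed
  show "\<forall>t\<in>S. size (\<alpha> t) = CARD('n)"
  proof
    fix t assume "t \<in> S"
    then obtain x :: "complex ^ 'n" where "\<alpha> t = Mult x" using in_range by blast
    then show "size (\<alpha> t) = CARD('n)" by (simp add: Mult_eq_entries)
  qed
  show "mset_continuous_on S \<alpha>"
    unfolding mset_continuous_on_def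
  proof (intro ballI allI impI)
    fix t e :: real assume "t \<in> S" "e > 0"
    obtain x :: "complex ^ 'n" where x: "\<alpha> t = Mult x" using in_range[OF \<open>t \<in> S\<close>] by blast
    define U where "U = {M \<in> range (Mult :: complex ^ 'n \<Rightarrow> _). matched_within e (\<alpha> t) M}"
    have "{w :: complex ^ 'n. Mult w \<in> U} = {w. matched_within e (\<alpha> t) (entries UNIV (($) w))}"
      unfolding U_def Mult_eq_entries by auto
    then have "openin (Mult_top TYPE('n)) U"
      unfolding open_Mult_top mult_open_def using open_matched_within_entries by (auto simp: U_def)
    then have "openin (top_of_set S) {s \<in> S. \<alpha> s \<in> U}"
      using assms unfolding continuous_map_def by simp
    moreover have "t \<in> {s \<in> S. \<alpha> s \<in> U}"
      using \<open>t \<in> S\<close> \<open>e > 0\<close> x unfolding U_def by (simp add: matched_within_refl)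
    ultimately obtain d where "d > 0" "\<forall>s\<in>S. dist s t < d \<longrightarrow> \<alpha> s \<in> U"
      unfolding openin_euclidean_subtopology_iff by blast
    then show "\<exists>d>0. \<forall>s\<in>S. \<bar>s - t\<bar> < d \<longrightarrow> matched_within e (\<alpha> t) (\<alpha> s)"
      unfolding U_def dist_real_def by blast
  qed
qed

theorem theorem8p3:
  fixes \<alpha> :: "real \<Rightarrow> complex multiset" and x0 :: "complex ^ 'n"
  assumes "continuous_map (top_of_set {0..1}) (Mult_top TYPE('n)) \<alpha>"
    and "Mult x0 = \<alpha> 0"
  shows "(\<exists>\<beta> :: real \<Rightarrow> complex ^ 'n. path \<beta> \<and> \<beta> 0 = x0 \<and> (\<forall>t\<in>{0..1}. Mult (\<beta> t) = \<alpha> t))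
     \<and> (weakly_increasing_shape \<alpha> \<longrightarrow>
          (\<forall>\<beta>1 \<beta>2 :: real \<Rightarrow> complex ^ 'n.
             path \<beta>1 \<and> \<beta>1 0 = x0 \<and> (\<forall>t\<in>{0..1}. Mult (\<beta>1 t) = \<alpha> t) \<and>
             path \<beta>2 \<and> \<beta>2 0 = x0 \<and> (\<forall>t\<in>{0..1}. Mult (\<beta>2 t) = \<alpha> t)
             \<longrightarrow> (\<forall>t\<in>{0..1}. \<beta>1 t = \<beta>2 t)))"
proof (intro conjI impI allI)
  obtain \<beta> where "lift_on UNIV {0..1} \<alpha> \<beta>" "\<forall>i. \<beta> 0 i = x0 $ i"
    using path_liftableD[OF path_liftable[OF finite_class.finite_UNIV] zero_le_one
        mset_continuous_on_Mult_top[OF assms(1)]] assms(2)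
    unfolding Mult_eq_entries by auto
  moreover have "(\<lambda>t. ($) (\<chi> i. \<beta> t i)) = \<beta>" by (simp add: fun_eq_iff)
  ultimately show "\<exists>\<beta>. path \<beta> \<and> \<beta> 0 = x0 \<and> (\<forall>t\<in>{0..1}. Mult (\<beta> t) = \<alpha> t)"
    using lift_on_iff_path[of \<alpha> "\<lambda>t. \<chi> i. \<beta> t i"] by (auto simp: vec_eq_iff)
next
  fix \<beta>1 \<beta>2 :: "real \<Rightarrow> complex ^ 'n"
  assume "weakly_increasing_shape \<alpha>"
    and \<beta>: "path \<beta>1 \<and> \<beta>1 0 = x0 \<and> (\<forall>t\<in>{0..1}. Mult (\<beta>1 t) = \<alpha> t) \<and>
      path \<beta>2 \<and> \<beta>2 0 = x0 \<and> (\<forall>t\<in>{0..1}. Mult (\<beta>2 t) = \<alpha> t)"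
  then have shape: "card (set_mset (\<alpha> t)) \<le> card (set_mset (\<alpha> s))" if "0 \<le> s" "s \<le> t" "t \<le> 1" for s t
    using that card_set_mset_le_if_partition_le unfolding weakly_increasing_shape_def by blast
  have "lift_on UNIV {0..1} \<alpha> (\<lambda>t. ($) (\<beta>1 t))" "lift_on UNIV {0..1} \<alpha> (\<lambda>t. ($) (\<beta>2 t))"
    using \<beta> lift_on_iff_path by blast+
  moreover have "\<forall>i\<in>UNIV. \<beta>1 0 $ i = \<beta>2 0 $ i" using \<beta> by simp
  ultimately have "\<forall>t\<in>{0..1}. \<forall>i\<in>UNIV. \<beta>1 t $ i = \<beta>2 t $ i"
    by (rule lifts_unique[where A = \<alpha>, OF finite_class.finite_UNIV zero_le_one _ _ _ shape])
  then show "\<forall>t\<in>{0..1}. \<beta>1 t = \<beta>2 t" by (simp add: vec_eq_iff)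
qed

end
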